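(* For every $r\geq 2$, there exist $c_1,C>0$ such that the following holds. Let $H$ be an $r$-uniform hypergraph on $n$ vertices of average degree $d$. Let $X\subset V(H)$ be such that every vertex in $X$ has degree at least $Cd$. Then $\mathrm{disc}^{+}(H)\geq c_1|\partial(X)|$.
   Context: $\partial(X)$ denotes the set of edges of $H$ having at least one vertex in $X$. The average degree is $d=r|E(H)|/n$. With edge density $p=|E(H)|/\binom{n}{r}$ and $e(U)$ the number of edges contained in $U\subset V(H)$, $\mathrm{disc}(U)=e(U)-p\binom{|U|}{r}$ and $\mathrm{disc}^{+}(H)=\max_{U\subset V(H)}\mathrm{disc}(U)$. *)

theory Defs
  imports Complex_Main
begin

definition uniform_hypergraph :: "nat \<Rightarrow> 'a set \<Rightarrow> 'a set set \<Rightarrow> bool" where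
  "uniform_hypergraph r V E \<longleftrightarrow> finite V \<and> (\<forall>e\<in>E. e \<subseteq> V \<and> card e = r)"

definition hdegree :: "'a set set \<Rightarrow> 'a \<Rightarrow> nat" where
  "hdegree E v = card {e\<in>E. v \<in> e}"

definition avg_degree :: "nat \<Rightarrow> 'a set \<Rightarrow> 'a set set \<Rightarrow> real" where
  "avg_degree r V E = real r * real (card E) / real (card V)"

definition edge_density :: "nat \<Rightarrow> 'a set \<Rightarrow> 'a set set \<Rightarrow> real" where
  "edge_density r V E = real (card E) / real (card V choose r)"

definition edges_in :: "'a set set \<Rightarrow> 'a set \<Rightarrow> nat" where
  "edges_in E U = card {e\<in>E. e \<subseteq> U}"

definition disc :: "nat \<Rightarrow> 'a set \<Rightarrow> 'a set set \<Rightarrow> 'a set \<Rightarrow> real" where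
  "disc r V E U = real (edges_in E U) - edge_density r V E * real (card U choose r)"

definition disc_plus :: "nat \<Rightarrow> 'a set \<Rightarrow> 'a set set \<Rightarrow> real" where
  "disc_plus r V E = Max ((disc r V E) ` Pow V)"

definition boundary :: "'a set set \<Rightarrow> 'a set \<Rightarrow> 'a set set" where
  "boundary E X = {e\<in>E. e \<inter> X \<noteq> {}}"

end

theory Submission imports Defs begin

text \<open>Let \<open>U = X \<union> W\<close> with \<open>W\<close> a uniformly random subset of \<open>V - X\<close>, so that an
  \<open>r\<close>-set \<open>S\<close> lies in \<open>U\<close> with probability \<open>2 ^ - |S - X|\<close>. An edge meeting \<open>X\<close> survives
  with probability at least \<open>2 ^ (1 - r)\<close>, every other \<open>r\<close>-set with probability \<open>2 ^ - r\<close>;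
  and the \<open>r\<close>-sets meeting \<open>X\<close>, at most \<open>|X| binom(n - 1, r - 1)\<close> of them, contribute
  at most \<open>p |X| binom(n - 1, r - 1) = |X| d\<close> to the expected count \<open>p binom(|U|, r)\<close>.
  Hence the expected discrepancy of \<open>U\<close> is at least \<open>2 ^ - r |\<partial>(X)| - |X| d\<close>.
  Double counting gives \<open>C d |X| \<le> (sum of the degrees over X) \<le> r |\<partial>(X)|\<close>, so for
  \<open>C = r 2 ^ (r + 1)\<close> the error term is at most half the main term.\<close>

lemma card_supersets_within:
  assumes "finite A" "B \<subseteq> A"
  shows "card {W. W \<subseteq> A \<and> B \<subseteq> W} = 2 ^ (card A - card B)"
proof -
  have "bij_betw (\<lambda>W. W - B) {W. W \<subseteq> A \<and> B \<subseteq> W} (Pow (A - B))"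
    by (rule bij_betw_byWitness[where f'="\<lambda>Y. Y \<union> B"]) (use assms in auto)
  then have "card {W. W \<subseteq> A \<and> B \<subseteq> W} = card (Pow (A - B))"
    by (rule bij_betw_same_card)
  also have "\<dots> = 2 ^ (card A - card B)"
    using assms by (simp add: card_Pow card_Diff_subset finite_subset)
  finally show ?thesis .
qed

lemma card_subsets_containing:
  assumes "finite V" "x \<in> V" "r \<ge> 1"
  shows "card {S. S \<subseteq> V \<and> card S = r \<and> x \<in> S} = (card V - 1) choose (r - 1)"
proof -
  have "bij_betw (\<lambda>S. S - {x}) {S. S \<subseteq> V \<and> card S = r \<and> x \<in> S}
      {T. T \<subseteq> V - {x} \<and> card T = r - 1}"
    by (rule bij_betw_byWitness[where f'="insert x"])
      (use assms in \<open>auto simp: card_insert_if finite_subset\<close>)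
  then have "card {S. S \<subseteq> V \<and> card S = r \<and> x \<in> S} = card {T. T \<subseteq> V - {x} \<and> card T = r - 1}"
    by (rule bij_betw_same_card)
  also have "\<dots> = card (V - {x}) choose (r - 1)"
    using assms by (simp add: n_subsets)
  finally show ?thesis using assms by simp
qed

lemma sum_card_Int_eq_sum_card_containing:
  assumes "finite F" "finite X"
  shows "(\<Sum>S\<in>F. card (S \<inter> X)) = (\<Sum>x\<in>X. card {S\<in>F. x \<in> S})"
proof -
  have "(\<Sum>x\<in>X. card {S\<in>F. x \<in> S}) = (\<Sum>x\<in>X. \<Sum>S\<in>F. of_bool (x \<in> S))"
    using assms(1) by (simp add: Int_def conj_commute)
  also have "\<dots> = (\<Sum>S\<in>F. \<Sum>x\<in>X. of_bool (x \<in> S))"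
    by (rule sum.swap)
  also have "\<dots> = (\<Sum>S\<in>F. card (S \<inter> X))"
    using assms(2) by (simp add: Int_def conj_commute)
  finally show ?thesis ..
qed

lemma sum_Pow_card_subsets_of_union:
  fixes F :: "'a set set"
  assumes "finite A" "finite F" "\<And>S. S \<in> F \<Longrightarrow> S - X \<subseteq> A"
  shows "(\<Sum>W\<in>Pow A. real (card {S\<in>F. S \<subseteq> X \<union> W}))
    = 2 ^ card A * (\<Sum>S\<in>F. (1/2) ^ card (S - X))"
proof -
  have supersets: "(\<Sum>W\<in>Pow A. of_bool (S \<subseteq> X \<union> W)) = (2::real) ^ card A * (1/2) ^ card (S - X)"
    if "S \<in> F" for S
  proof -
    have "Pow A \<inter> {W. S \<subseteq> X \<union> W} = {W. W \<subseteq> A \<and> S - X \<subseteq> W}" by auto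
    then have "(\<Sum>W\<in>Pow A. of_bool (S \<subseteq> X \<union> W)) = (2::real) ^ (card A - card (S - X))"
      using assms(1) card_supersets_within[OF assms(1) assms(3)[OF that]] by simp
    also have "\<dots> = 2 ^ card A / 2 ^ card (S - X)"
      using card_mono[OF assms(1) assms(3)[OF that]] by (simp add: power_diff)
    also have "\<dots> = 2 ^ card A * (1/2) ^ card (S - X)"
      by (simp add: power_one_over)
    finally show ?thesis .
  qed
  have "(\<Sum>W\<in>Pow A. real (card {S\<in>F. S \<subseteq> X \<union> W}))
      = (\<Sum>W\<in>Pow A. \<Sum>S\<in>F. of_bool (S \<subseteq> X \<union> W))"
    using assms(2) by (simp add: Int_def Collect_conj_eq[symmetric] conj_commute)
  also have "\<dots> = (\<Sum>S\<in>F. \<Sum>W\<in>Pow A. of_bool (S \<subseteq> X \<union> W))"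
    by (rule sum.swap)
  also have "\<dots> = 2 ^ card A * (\<Sum>S\<in>F. (1/2) ^ card (S - X))"
    by (simp add: supersets sum_distrib_left del: sum_of_bool_eq)
  finally show ?thesis .
qed

lemma disc_plus_ge_weighted_count:
  assumes "uniform_hypergraph r V E" "X \<subseteq> V"
  shows "(\<Sum>e\<in>E. (1/2) ^ card (e - X))
      - edge_density r V E * (\<Sum>S | S \<subseteq> V \<and> card S = r. (1/2) ^ card (S - X))
    \<le> disc_plus r V E"
proof -
  define A where "A = V - X"
  define R where "R = {S. S \<subseteq> V \<and> card S = r}"
  have "finite V" and E_R: "E \<subseteq> R"
    using assms(1) unfolding uniform_hypergraph_def R_def by auto
  then have fin: "finite A" "finite R" "finite E"
    unfolding A_def R_def by (auto intro: finite_subset)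
  have disc_eq: "disc r V E (X \<union> W)
      = real (card {e\<in>E. e \<subseteq> X \<union> W}) - edge_density r V E * real (card {S\<in>R. S \<subseteq> X \<union> W})"
    if "W \<in> Pow A" for W
  proof -
    have "finite (X \<union> W)"
      using that assms(2) \<open>finite V\<close> unfolding A_def by (auto intro: finite_subset)
    moreover have "{S\<in>R. S \<subseteq> X \<union> W} = {S. S \<subseteq> X \<union> W \<and> card S = r}"
      using that assms(2) unfolding R_def A_def by auto
    ultimately have "card (X \<union> W) choose r = card {S\<in>R. S \<subseteq> X \<union> W}"
      by (simp add: n_subsets)
    then show ?thesis
      unfolding disc_def edges_in_def by simp
  qed
  have "(\<Sum>W\<in>Pow A. real (card {e\<in>E. e \<subseteq> X \<union> W}))
      = 2 ^ card A * (\<Sum>e\<in>E. (1/2) ^ card (e - X))"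
    by (rule sum_Pow_card_subsets_of_union) (use E_R fin in \<open>auto simp: A_def R_def\<close>)
  moreover have "(\<Sum>W\<in>Pow A. real (card {S\<in>R. S \<subseteq> X \<union> W}))
      = 2 ^ card A * (\<Sum>S\<in>R. (1/2) ^ card (S - X))"
    by (rule sum_Pow_card_subsets_of_union) (use fin in \<open>auto simp: A_def R_def\<close>)
  ultimately have avg: "(\<Sum>W\<in>Pow A. disc r V E (X \<union> W)) = 2 ^ card A *
      ((\<Sum>e\<in>E. (1/2) ^ card (e - X)) - edge_density r V E * (\<Sum>S\<in>R. (1/2) ^ card (S - X)))"
    by (simp add: disc_eq sum_subtractf flip: sum_distrib_left) (simp add: algebra_simps)
  have le_disc_plus: "disc r V E (X \<union> W) \<le> disc_plus r V E" if "W \<in> Pow A" for W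
    unfolding disc_plus_def using that \<open>finite V\<close> assms(2) by (intro Max_ge) (auto simp: A_def)
  have "(\<Sum>W\<in>Pow A. disc r V E (X \<union> W)) \<le> 2 ^ card A * disc_plus r V E"
    using sum_bounded_above[of "Pow A" "\<lambda>W. disc r V E (X \<union> W)", OF le_disc_plus] fin(1)
    by (simp add: card_Pow)
  with avg show ?thesis
    unfolding R_def by simp
qed

lemma half_pow_card_diff_ge:
  assumes "finite e"
  shows "(1/2::real) ^ card e * (1 + of_bool (e \<inter> X \<noteq> {})) \<le> (1/2) ^ card (e - X)"
proof (cases "e \<inter> X = {}")
  case True
  then show ?thesis by (simp add: Diff_triv)
next
  case False
  then have "card (e - X) < card e"
    using assms by (intro psubset_card_mono) auto
  then have "(1/2::real) ^ (card e - 1) \<le> (1/2) ^ card (e - X)"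
    by (intro power_decreasing) auto
  moreover have "(1/2::real) ^ (card e - 1) = 2 * (1/2) ^ card e"
    using \<open>card (e - X) < card e\<close> by (cases "card e") auto
  ultimately have "(1/2::real) ^ card e * 2 \<le> (1/2) ^ card (e - X)"
    by linarith
  then show ?thesis using False by simp
qed

lemma sum_edges_half_pow_ge:
  assumes "uniform_hypergraph r V E"
  shows "(1/2) ^ r * (card E + card (boundary E X)) \<le> (\<Sum>e\<in>E. (1/2::real) ^ card (e - X))"
proof -
  have edge: "finite e \<and> card e = r" if "e \<in> E" for e
    using assms that finite_subset unfolding uniform_hypergraph_def by blast
  then have "finite E"
    using assms finite_subset[of E "Pow V"] unfolding uniform_hypergraph_def by auto
  have "(1/2) ^ r * (card E + card (boundary E X))
      = (\<Sum>e\<in>E. (1/2::real) ^ r * (1 + of_bool (e \<inter> X \<noteq> {})))"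
    using \<open>finite E\<close> unfolding boundary_def
    by (simp add: sum.distrib sum_distrib_left[symmetric] Int_def Collect_conj_eq[symmetric])
  also have "\<dots> \<le> (\<Sum>e\<in>E. (1/2) ^ card (e - X))"
  proof (rule sum_mono)
    fix e assume "e \<in> E"
    then show "(1/2) ^ r * (1 + of_bool (e \<inter> X \<noteq> {})) \<le> (1/2::real) ^ card (e - X)"
      using edge half_pow_card_diff_ge[of e X] by simp
  qed
  finally show ?thesis .
qed

lemma sum_subsets_half_pow_le:
  assumes "finite V" "X \<subseteq> V" "r \<ge> 1"
  shows "(\<Sum>S | S \<subseteq> V \<and> card S = r. (1/2::real) ^ card (S - X))
    \<le> (1/2) ^ r * (card V choose r) + card X * ((card V - 1) choose (r - 1))"
proof -
  define R where "R = {S. S \<subseteq> V \<and> card S = r}"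
  have "finite R" "finite X"
    using assms unfolding R_def by (auto intro: finite_subset)
  have "(1/2::real) ^ card (S - X) \<le> (1/2) ^ r + card (S \<inter> X)" if "S \<in> R" for S
  proof (cases "S \<inter> X = {}")
    case True
    then show ?thesis using that by (simp add: R_def Diff_triv)
  next
    case False
    then have "1 \<le> real (card (S \<inter> X))"
      using \<open>finite X\<close> by (simp add: Suc_le_eq card_gt_0_iff)
    moreover have "(1/2::real) ^ card (S - X) \<le> 1" by (simp add: power_le_one)
    moreover have "(0::real) \<le> (1/2) ^ r" by simp
    ultimately show ?thesis by linarith
  qed
  then have "(\<Sum>S\<in>R. (1/2::real) ^ card (S - X)) \<le> (\<Sum>S\<in>R. (1/2) ^ r + card (S \<inter> X))"
    by (rule sum_mono)
  moreover have "(\<Sum>S\<in>R. card (S \<inter> X)) = (\<Sum>x\<in>X. card {S\<in>R. x \<in> S})"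
    using \<open>finite R\<close> \<open>finite X\<close> by (rule sum_card_Int_eq_sum_card_containing)
  moreover have "\<dots> = card X * ((card V - 1) choose (r - 1))"
    using assms card_subsets_containing[OF assms(1) _ assms(3)] unfolding R_def
    by (simp add: subset_iff conj_assoc)
  ultimately show ?thesis
    using assms(1) unfolding R_def
    by (simp add: sum.distrib n_subsets mult.commute flip: of_nat_sum of_nat_mult)
qed

lemma edge_density_mult_choose:
  assumes "uniform_hypergraph r V E"
  shows "edge_density r V E * (card V choose r) = card E"
proof (cases "card V choose r = 0")
  case True
  have "finite V" using assms unfolding uniform_hypergraph_def by simp
  with True have "{S. S \<subseteq> V \<and> card S = r} = {}"
    by (simp add: n_subsets[symmetric] finite_subset)
  then have "E = {}" using assms unfolding uniform_hypergraph_def by auto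
  then show ?thesis by (simp add: edge_density_def)
next
  case False
  then show ?thesis unfolding edge_density_def by simp
qed

lemma edge_density_mult_choose_le_avg_degree:
  assumes "r \<ge> 1"
  shows "edge_density r V E * ((card V - 1) choose (r - 1)) \<le> avg_degree r V E"
proof (cases "card V choose r = 0")
  case True
  then show ?thesis unfolding edge_density_def avg_degree_def True by simp
next
  case False
  then obtain m where m: "card V = Suc m"
    using assms by (cases "card V") auto
  have "Suc m * (m choose (r - 1)) = (Suc m choose r) * r"
    using Suc_times_binomial_eq[of m "r - 1"] assms by simp
  then have "real (Suc m) * (m choose (r - 1)) = (Suc m choose r) * r"
    by (metis of_nat_mult)
  then have "real (m choose (r - 1)) / (Suc m choose r) = r / Suc m"
    using False m by (simp add: field_simps)
  then show ?thesis
    unfolding edge_density_def avg_degree_def m by (simp add: divide_inverse mult_ac)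
qed

lemma sum_hdegree_le_boundary:
  assumes "uniform_hypergraph r V E" "X \<subseteq> V"
  shows "(\<Sum>x\<in>X. hdegree E x) \<le> r * card (boundary E X)"
proof -
  have "finite V" using assms unfolding uniform_hypergraph_def by simp
  then have "finite E" "finite X"
    using assms finite_subset[of E "Pow V"] finite_subset[of X V]
    unfolding uniform_hypergraph_def by auto
  have "(\<Sum>x\<in>X. hdegree E x) = (\<Sum>e\<in>E. card (e \<inter> X))"
    unfolding hdegree_def using \<open>finite E\<close> \<open>finite X\<close>
    by (rule sum_card_Int_eq_sum_card_containing[symmetric])
  also have "\<dots> = (\<Sum>e\<in>boundary E X. card (e \<inter> X))"
    using \<open>finite E\<close> unfolding boundary_def by (intro sum.mono_neutral_right) auto
  also have "\<dots> \<le> (\<Sum>e\<in>boundary E X. r)"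
    using assms \<open>finite V\<close> unfolding boundary_def uniform_hypergraph_def
    by (intro sum_mono) (metis (no_types, lifting) card_mono finite_subset inf_le1 mem_Collect_eq)
  finally show ?thesis by (simp add: mult.commute)
qed

lemma disc_plus_ge_boundary:
  assumes "uniform_hypergraph r V E" "X \<subseteq> V" "r \<ge> 1"
  shows "(1/2) ^ r * card (boundary E X) - card X * avg_degree r V E \<le> disc_plus r V E"
proof -
  define p where "p = edge_density r V E"
  have "finite V" using assms unfolding uniform_hypergraph_def by simp
  have "p \<ge> 0" unfolding p_def edge_density_def by simp
  then have "p * (\<Sum>S | S \<subseteq> V \<and> card S = r. (1/2::real) ^ card (S - X))
      \<le> p * ((1/2) ^ r * (card V choose r) + card X * ((card V - 1) choose (r - 1)))"
    using sum_subsets_half_pow_le[OF \<open>finite V\<close> assms(2,3)] by (rule mult_left_mono[rotated])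
  also have "\<dots> = (1/2) ^ r * (p * (card V choose r)) + card X * (p * ((card V - 1) choose (r - 1)))"
    by (simp add: algebra_simps)
  also have "\<dots> \<le> (1/2) ^ r * card E + card X * avg_degree r V E"
    using edge_density_mult_choose[OF assms(1)]
      mult_left_mono[OF edge_density_mult_choose_le_avg_degree[OF assms(3)] of_nat_0_le_iff[of "card X"]]
    unfolding p_def by simp
  finally show ?thesis
    using disc_plus_ge_weighted_count[OF assms(1,2)] sum_edges_half_pow_ge[OF assms(1), of X]
    unfolding p_def by (simp add: algebra_simps)
qed

theorem lemma5p2:
  fixes r :: nat
  assumes "r \<ge> 2"
  shows "\<exists>c1 C :: real. c1 > 0 \<and> C > 0 \<and>
    (\<forall>(V :: nat set) E X. uniform_hypergraph r V E \<longrightarrow> X \<subseteq> V \<longrightarrow>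
       (\<forall>v\<in>X. real (hdegree E v) \<ge> C * avg_degree r V E) \<longrightarrow>
       disc_plus r V E \<ge> c1 * real (card (boundary E X)))"
proof (intro exI conjI allI impI)
  define C :: real where "C = r * 2 ^ (r + 1)"
  show "(1/2) ^ (r + 1) > (0::real)" "C > 0"
    using assms by (auto simp: C_def)
  fix V :: "nat set" and E X
  assume H: "uniform_hypergraph r V E" and "X \<subseteq> V"
    and deg: "\<forall>v\<in>X. real (hdegree E v) \<ge> C * avg_degree r V E"
  define B where "B = real (card (boundary E X))"
  have "card X * (C * avg_degree r V E) \<le> (\<Sum>x\<in>X. real (hdegree E x))"
    using sum_mono[of X "\<lambda>_. C * avg_degree r V E"] deg by simp
  also have "\<dots> \<le> r * B"
    using of_nat_mono[OF sum_hdegree_le_boundary[OF H \<open>X \<subseteq> V\<close>]] unfolding B_def by simp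
  finally have "card X * avg_degree r V E \<le> B / 2 ^ (r + 1)"
    using assms by (simp add: C_def field_simps)
  moreover have "(1/2) ^ r * B - card X * avg_degree r V E \<le> disc_plus r V E"
    using disc_plus_ge_boundary[OF H \<open>X \<subseteq> V\<close>] assms unfolding B_def by simp
  ultimately show "disc_plus r V E \<ge> (1/2) ^ (r + 1) * real (card (boundary E X))"
    unfolding B_def by (simp add: field_simps power_one_over)
qed

end
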